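(* Let $\mu$ be a nonzero finite Borel measure on $\mathbb{R}$ with compact support, with moments $y_k=\int x^k d\mu$ and $\mathbf{y}=(y_k)_{k\in\mathbb{N}}$. For $d\in\mathbb{N}$ consider the semidefinite program $$\rho_d=\min_{a,b\in\mathbb{R}}\{\,b-a:\ \mathbf{H}_d(\theta_a\,\mathbf{y})\succeq0,\ \mathbf{H}_d(-\theta_b\,\mathbf{y})\succeq0\,\}.$$ Then (a) this program has an optimal solution $(a_d,b_d)$ for every $d\in\mathbb{N}$; (b) for any sequence $(a_d,b_d)_{d\in\mathbb{N}}$ of optimal solutions, $(a_d,b_d)\to(a^*,b^* )$ as $d\to\infty$ for some real $a^*\le b^*$ with $\mathrm{supp}\,\mu\subseteq[a^*,b^*]$; moreover $[a^*,b^*]$ is the smallest closed interval containing $\mathrm{supp}\,\mu$, and if $\mathrm{supp}\,\mu$ is an interval then $\mathrm{supp}\,\mu=[a^*,b^*]$.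
   Context: For a sequence $\mathbf{y}=(y_k)_{k\in\mathbb{N}}$ and a polynomial $\theta(x)=\sum_{k=0}^s\theta_kx^k$, $\mathbf{H}_d(\theta\,\mathbf{y})$ is the $(d+1)\times(d+1)$ symmetric matrix with entries $\sum_{k=0}^s\theta_k\,y_{i+j+k-2}$, $i,j=1,\ldots,d+1$. For $a\in\mathbb{R}$, $\theta_a(x)=x-a$; thus $\mathbf{H}_d(\theta_a\mathbf{y})(i,j)=y_{i+j-1}-a\,y_{i+j-2}$ and $\mathbf{H}_d(-\theta_b\mathbf{y})(i,j)=b\,y_{i+j-2}-y_{i+j-1}$. $\succeq0$ denotes positive semidefiniteness. $\mathrm{supp}\,\mu$ is the smallest closed set whose complement has $\mu$-measure zero. *)

theory Defs
  imports "HOL-Analysis.Analysis" "HOL-Probability.Probability" "HOL-Computational_Algebra.Polynomial"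
begin

definition moment_seq :: "real measure \<Rightarrow> nat \<Rightarrow> real" where
  "moment_seq M k = integral\<^sup>L M (\<lambda>x. x ^ k)"

definition measure_support :: "real measure \<Rightarrow> real set" where
  "measure_support M = \<Inter> {C. closed C \<and> emeasure M (- C) = 0}"

(* localizing Hankel matrix H_d(\<theta> y), 0-based indices i,j \<in> {0..d}:
   entry (i,j) = \<Sum>_k \<theta>_k y_(i+j+k)   (paper's (i+1,j+1) entry) *)
definition hankel_loc :: "nat \<Rightarrow> real poly \<Rightarrow> (nat \<Rightarrow> real) \<Rightarrow> nat \<Rightarrow> nat \<Rightarrow> real" where
  "hankel_loc d \<theta> y i j = (\<Sum>k\<le>degree \<theta>. coeff \<theta> k * y (i + j + k))"

definition psd :: "nat \<Rightarrow> (nat \<Rightarrow> nat \<Rightarrow> real) \<Rightarrow> bool" where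
  "psd d H \<longleftrightarrow> (\<forall>v :: nat \<Rightarrow> real. (\<Sum>i\<le>d. \<Sum>j\<le>d. v i * H i j * v j) \<ge> 0)"

definition theta :: "real \<Rightarrow> real poly" where
  "theta a = [:-a, 1:]"

definition sdp_feasible :: "(nat \<Rightarrow> real) \<Rightarrow> nat \<Rightarrow> real \<Rightarrow> real \<Rightarrow> bool" where
  "sdp_feasible y d a b \<longleftrightarrow>
     psd d (hankel_loc d (theta a) y) \<and> psd d (hankel_loc d (- theta b) y)"

definition sdp_optimal :: "(nat \<Rightarrow> real) \<Rightarrow> nat \<Rightarrow> real \<Rightarrow> real \<Rightarrow> bool" where
  "sdp_optimal y d a b \<longleftrightarrow> sdp_feasible y d a b \<and>
     (\<forall>a' b'. sdp_feasible y d a' b' \<longrightarrow> b - a \<le> b' - a')"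

end

theory Submission
  imports Defs
begin

(* Write K for the support of \<mu> and P_v for the polynomial with
   coefficient vector v.  The localizing quadratic forms are integrals:
     v^T H_d(\<theta>_a y) v = \<integral> (x - a) P_v(x)^2 d\<mu>,   v^T H_d(-\<theta>_b y) v = \<integral> (b - x) P_v(x)^2 d\<mu>,
   so the SDP decouples into the set of feasible a (lower bounds) and the set
   of feasible b (upper bounds).  Each is closed (an intersection of closed
   half-lines), nonempty (min K resp. max K is feasible because \<mu> lives on K)
   and bounded (test with the constant polynomial), hence the SDP has the
   optimum (max of the a's, min of the b's), and every optimal a_d lies in
   [min K, \<infinity>), every optimal b_d in (-\<infinity>, max K].
   For convergence we show a localization lemma: for c \<in> K and r > 0 some
   polynomial p satisfies \<integral> (r - |x - c|) p^2 d\<mu> > 0 (take p close to the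
   bump max 0 (r - |x - c|) by Stone-Weierstrass and dominated convergence).
   Consequently, for large d no a > min K + r and no b < max K - r is feasible,
   so a_d \<rightarrow> min K and b_d \<rightarrow> max K; [min K, max K] is the convex hull of K. *)

(* The complement of the support is a null set: by Lindel\<ouml>f it is a countable
   union of open null sets. *)
lemma emeasure_compl_support:
  fixes M :: "real measure"
  assumes sets_M: "sets M = sets borel"
  shows "emeasure M (- measure_support M) = 0"
proof -
  define F where "F = {- C | C. closed C \<and> emeasure M (- C) = 0}"
  have "\<And>S. S \<in> F \<Longrightarrow> open S" unfolding F_def by auto
  then obtain F' where F': "F' \<subseteq> F" "countable F'" "\<Union>F' = \<Union>F"
    using Lindelof by metis
  have compl_eq: "- measure_support M = (\<Union>S\<in>F'. S)"
    using F'(3) unfolding F_def measure_support_def by auto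
  have "(\<Union>S\<in>F'. S) \<in> null_sets M"
  proof (rule null_sets_UN'[OF F'(2)])
    fix S assume "S \<in> F'"
    then obtain C where C: "S = - C" "closed C" "emeasure M (- C) = 0"
      using F'(1) unfolding F_def by blast
    then have "S \<in> sets M" using sets_M by (simp add: borel_closed)
    then show "S \<in> null_sets M" using C by (simp add: null_sets_def)
  qed
  then show ?thesis using compl_eq by (simp add: null_sets_def)
qed

definition poly_vec :: "nat \<Rightarrow> (nat \<Rightarrow> real) \<Rightarrow> real \<Rightarrow> real" where
  "poly_vec d v x = (\<Sum>i\<le>d. v i * x ^ i)"

lemma continuous_poly_vec [continuous_intros]: "continuous_on UNIV (poly_vec d v)"
  unfolding poly_vec_def by (intro continuous_intros)

lemma poly_vec_pad:
  "n \<le> d \<Longrightarrow> poly_vec d (\<lambda>i. if i \<le> n then w i else 0) x = poly_vec n w x"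
  unfolding poly_vec_def by (rule sum.mono_neutral_cong_right) auto

lemma poly_vec_one: "poly_vec d (\<lambda>i. if i = 0 then 1 else 0) x = 1"
proof -
  have "poly_vec d (\<lambda>i. if i = 0 then 1 else 0) x = (\<Sum>i\<le>d. if i = 0 then 1 else 0)"
    unfolding poly_vec_def by (intro sum.cong) auto
  then show ?thesis by simp
qed

section \<open>Localizing Hankel matrices as integrals\<close>

lemma hankel_quadratic_form:
  fixes M :: "real measure"
  assumes moments: "\<And>k. integrable M (\<lambda>x. x ^ k)"
  shows "(\<Sum>i\<le>d. \<Sum>j\<le>d. v i * (\<beta> * moment_seq M (i+j+1) + \<alpha> * moment_seq M (i+j)) * v j)
    = integral\<^sup>L M (\<lambda>x. (\<alpha> + \<beta> * x) * (poly_vec d v x)^2)"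
proof -
  have expand: "(\<alpha> + \<beta> * x) * (poly_vec d v x)^2 =
     (\<Sum>i\<le>d. \<Sum>j\<le>d. v i * (\<beta> * x^(i+j+1) + \<alpha> * x^(i+j)) * v j)" for x
    by (simp add: poly_vec_def power2_eq_square sum_product sum_distrib_left
        algebra_simps power_add)
  have shifted: "integrable M (\<lambda>x. x * x ^ k)" for k
    using moments[of "Suc k"] by simp
  show ?thesis
    unfolding expand by (simp add: moment_seq_def moments shifted)
qed

lemma hankel_loc_theta: "hankel_loc d (theta a) y i j = y (i+j+1) - a * y (i+j)"
  by (simp add: hankel_loc_def theta_def)

lemma hankel_loc_minus_theta: "hankel_loc d (- theta b) y i j = b * y (i+j) - y (i+j+1)"
  by (simp add: hankel_loc_def theta_def)

lemma psd_hankel_theta_iff: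
  fixes M :: "real measure"
  assumes "\<And>k. integrable M (\<lambda>x. x ^ k)"
  shows "psd d (hankel_loc d (theta a) (moment_seq M)) \<longleftrightarrow>
    (\<forall>v. 0 \<le> integral\<^sup>L M (\<lambda>x. (x - a) * (poly_vec d v x)^2))"
  using hankel_quadratic_form[OF assms, where \<beta>=1 and \<alpha>="-a"]
  unfolding psd_def hankel_loc_theta by (simp add: algebra_simps)

lemma psd_hankel_minus_theta_iff:
  fixes M :: "real measure"
  assumes "\<And>k. integrable M (\<lambda>x. x ^ k)"
  shows "psd d (hankel_loc d (- theta b) (moment_seq M)) \<longleftrightarrow>
    (\<forall>v. 0 \<le> integral\<^sup>L M (\<lambda>x. (b - x) * (poly_vec d v x)^2))"
  using hankel_quadratic_form[OF assms, where \<beta>="-1" and \<alpha>=b]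
  unfolding psd_def hankel_loc_minus_theta by (simp add: algebra_simps)

locale compactly_supported_measure =
  fixes M :: "real measure"
  assumes sets_M: "sets M = sets borel"
    and finite_M: "finite_measure M"
    and nonzero: "emeasure M UNIV \<noteq> 0"
    and compact_support: "compact (measure_support M)"
begin

abbreviation K :: "real set" where "K \<equiv> measure_support M"

lemma space_M: "space M = UNIV"
  using sets_eq_imp_space_eq[OF sets_M] by simp

lemma AE_support: "AE x in M. x \<in> K"
proof -
  have "- K \<in> null_sets M"
    using emeasure_compl_support[OF sets_M] sets_M compact_imp_closed[OF compact_support]
    by (simp add: null_sets_def borel_open open_Compl)
  then show ?thesis
    by (intro AE_I'[where N="- K"]) (auto simp: space_M)
qed

lemma total_measure_pos: "measure M UNIV > 0"
  using finite_measure.emeasure_eq_measure[OF finite_M, of UNIV] nonzero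
  by (metis ennreal_0 measure_nonneg order_le_less)

lemma measure_ball_support_pos:
  assumes "c \<in> K" "r > 0"
  shows "measure M (ball c r) > 0"
proof -
  have "emeasure M (ball c r) \<noteq> 0"
  proof
    assume "emeasure M (ball c r) = 0"
    then have "K \<subseteq> - ball c r"
      unfolding measure_support_def by (auto intro!: Inter_lower)
    then show False using assms by auto
  qed
  then show ?thesis
    using finite_measure.emeasure_eq_measure[OF finite_M]
    by (metis ennreal_0 measure_nonneg order_le_less)
qed

lemma bounded_on_support:
  assumes "continuous_on UNIV f"
  obtains B where "\<And>x. x \<in> K \<Longrightarrow> \<bar>f x :: real\<bar> \<le> B"
proof -
  have "compact (f ` K)"
    using compact_continuous_image continuous_on_subset[OF assms] compact_support by blast
  then show ?thesis
    using that compact_imp_bounded by (fastforce simp: bounded_iff)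
qed

lemma borel_measurable_continuous:
  "continuous_on UNIV f \<Longrightarrow> (f :: real \<Rightarrow> real) \<in> borel_measurable M"
  using borel_measurable_continuous_onI measurable_cong_sets[OF sets_M refl] by blast

lemma integrable_continuous:
  assumes "continuous_on UNIV f"
  shows "integrable M (f :: real \<Rightarrow> real)"
proof -
  obtain B where "\<And>x. x \<in> K \<Longrightarrow> \<bar>f x\<bar> \<le> B" using bounded_on_support[OF assms] by blast
  then show ?thesis
    using AE_support borel_measurable_continuous[OF assms]
    by (intro finite_measure.integrable_const_bound[OF finite_M, where B=B]) auto
qed

lemma integrable_power: "integrable M (\<lambda>x. x ^ k)"
  by (rule integrable_continuous) (intro continuous_intros)

definition supp_min :: real where "supp_min = Inf K"
definition supp_max :: real where "supp_max = Sup K"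

lemma support_extrema:
  shows supp_min_in: "supp_min \<in> K" and supp_max_in: "supp_max \<in> K"
    and supp_min_le: "\<And>x. x \<in> K \<Longrightarrow> supp_min \<le> x"
    and supp_max_ge: "\<And>x. x \<in> K \<Longrightarrow> x \<le> supp_max"
proof -
  have ne: "K \<noteq> {}" using emeasure_compl_support[OF sets_M] nonzero by auto
  have bdd: "bdd_below K" "bdd_above K"
    using compact_imp_bounded[OF compact_support] bounded_imp_bdd_below bounded_imp_bdd_above
    by auto
  have closed: "closed K" using compact_imp_closed[OF compact_support] .
  show "supp_min \<in> K" "supp_max \<in> K"
    unfolding supp_min_def supp_max_def
    using closed_contains_Inf[OF ne bdd(1) closed] closed_contains_Sup[OF ne bdd(2) closed] .
  show "\<And>x. x \<in> K \<Longrightarrow> supp_min \<le> x" "\<And>x. x \<in> K \<Longrightarrow> x \<le> supp_max"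
    unfolding supp_min_def supp_max_def using bdd by (auto intro: cInf_lower cSup_upper)
qed

section \<open>The feasible sets of the semidefinite program\<close>

definition lower_feasible :: "nat \<Rightarrow> real set" where
  "lower_feasible d = {a. \<forall>v. 0 \<le> integral\<^sup>L M (\<lambda>x. (x - a) * (poly_vec d v x)^2)}"

definition upper_feasible :: "nat \<Rightarrow> real set" where
  "upper_feasible d = {b. \<forall>v. 0 \<le> integral\<^sup>L M (\<lambda>x. (b - x) * (poly_vec d v x)^2)}"

lemma sdp_feasible_iff:
  "sdp_feasible (moment_seq M) d a b \<longleftrightarrow> a \<in> lower_feasible d \<and> b \<in> upper_feasible d"
  unfolding sdp_feasible_def psd_hankel_theta_iff[OF integrable_power]
    psd_hankel_minus_theta_iff[OF integrable_power] lower_feasible_def upper_feasible_def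
  by simp

(* The constraints are affine in a resp. b. *)
lemma integral_lower_weight:
  "integral\<^sup>L M (\<lambda>x. (x - a) * (poly_vec d v x)^2) =
     integral\<^sup>L M (\<lambda>x. x * (poly_vec d v x)^2) - a * integral\<^sup>L M (\<lambda>x. (poly_vec d v x)^2)"
  by (simp add: left_diff_distrib integrable_continuous continuous_intros)

lemma integral_upper_weight:
  "integral\<^sup>L M (\<lambda>x. (b - x) * (poly_vec d v x)^2) =
     b * integral\<^sup>L M (\<lambda>x. (poly_vec d v x)^2) - integral\<^sup>L M (\<lambda>x. x * (poly_vec d v x)^2)"
  by (simp add: left_diff_distrib integrable_continuous continuous_intros)

(* Hence both feasible sets are intersections of closed half-lines. *)
lemma closed_lower_feasible: "closed (lower_feasible d)"
  unfolding lower_feasible_def integral_lower_weight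
  by (intro closed_Collect_all closed_Collect_le continuous_intros)

lemma closed_upper_feasible: "closed (upper_feasible d)"
  unfolding upper_feasible_def integral_upper_weight
  by (intro closed_Collect_all closed_Collect_le continuous_intros)

(* Since \<mu> lives on [supp_min, supp_max], these endpoints are feasible. *)
lemma supp_min_lower_feasible: "supp_min \<in> lower_feasible d"
  unfolding lower_feasible_def using AE_support supp_min_le
  by (auto intro!: integral_nonneg_AE elim!: eventually_mono)

lemma supp_max_upper_feasible: "supp_max \<in> upper_feasible d"
  unfolding upper_feasible_def using AE_support supp_max_ge
  by (auto intro!: integral_nonneg_AE elim!: eventually_mono)

(* Testing with the constant polynomial 1 bounds the feasible sets. *)
lemma lower_feasible_le_supp_max:
  assumes "a \<in> lower_feasible d" shows "a \<le> supp_max"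
proof -
  have "0 \<le> integral\<^sup>L M (\<lambda>x. (x - a) * (poly_vec d (\<lambda>i. if i = 0 then 1 else 0) x)^2)"
    using assms unfolding lower_feasible_def by blast
  then have "0 \<le> integral\<^sup>L M (\<lambda>x. x - a)" by (simp add: poly_vec_one)
  also have "\<dots> \<le> integral\<^sup>L M (\<lambda>x. supp_max - a)"
    using AE_support supp_max_ge
    by (intro integral_mono_AE integrable_continuous continuous_intros) (auto elim!: eventually_mono)
  also have "\<dots> = (supp_max - a) * measure M UNIV" by (simp add: space_M)
  finally show ?thesis using total_measure_pos by (simp add: zero_le_mult_iff)
qed

lemma upper_feasible_ge_supp_min:
  assumes "b \<in> upper_feasible d" shows "supp_min \<le> b"
proof -
  have "0 \<le> integral\<^sup>L M (\<lambda>x. (b - x) * (poly_vec d (\<lambda>i. if i = 0 then 1 else 0) x)^2)"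
    using assms unfolding upper_feasible_def by blast
  then have "0 \<le> integral\<^sup>L M (\<lambda>x. b - x)" by (simp add: poly_vec_one)
  also have "\<dots> \<le> integral\<^sup>L M (\<lambda>x. b - supp_min)"
    using AE_support supp_min_le
    by (intro integral_mono_AE integrable_continuous continuous_intros) (auto elim!: eventually_mono)
  also have "\<dots> = (b - supp_min) * measure M UNIV" by (simp add: space_M)
  finally show ?thesis using total_measure_pos by (simp add: zero_le_mult_iff)
qed

(* Part (a): the largest feasible a and the smallest feasible b form an optimum. *)
lemma sdp_optimum_exists: "\<exists>a b. sdp_optimal (moment_seq M) d a b"
proof (intro exI)
  have bdd: "bdd_above (lower_feasible d)" "bdd_below (upper_feasible d)"
    using lower_feasible_le_supp_max upper_feasible_ge_supp_min
    unfolding bdd_above_def bdd_below_def by blast+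
  have ne: "lower_feasible d \<noteq> {}" "upper_feasible d \<noteq> {}"
    using supp_min_lower_feasible supp_max_upper_feasible by blast+
  have "Sup (lower_feasible d) \<in> lower_feasible d" "Inf (upper_feasible d) \<in> upper_feasible d"
    using closed_contains_Sup[OF ne(1) bdd(1) closed_lower_feasible]
      closed_contains_Inf[OF ne(2) bdd(2) closed_upper_feasible] .
  then show "sdp_optimal (moment_seq M) d (Sup (lower_feasible d)) (Inf (upper_feasible d))"
    unfolding sdp_optimal_def sdp_feasible_iff
    by (auto intro!: diff_mono cSup_upper[OF _ bdd(1)] cInf_lower[OF _ bdd(2)])
qed

lemma sdp_optimal_bounds:
  assumes "sdp_optimal (moment_seq M) d a b"
  shows "a \<in> lower_feasible d" "supp_min \<le> a" "b \<in> upper_feasible d" "b \<le> supp_max"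
proof -
  show a: "a \<in> lower_feasible d" and b: "b \<in> upper_feasible d"
    using assms unfolding sdp_optimal_def sdp_feasible_iff by auto
  have "b - a \<le> b - supp_min" "b - a \<le> supp_max - a"
    using assms a b supp_min_lower_feasible supp_max_upper_feasible
    unfolding sdp_optimal_def sdp_feasible_iff by blast+
  then show "supp_min \<le> a" "b \<le> supp_max" by simp_all
qed

section \<open>Localization at points of the support\<close>

lemma bump_localizer_pos:
  assumes c: "c \<in> K" and r: "r > 0"
  shows "integral\<^sup>L M (\<lambda>x. (r - \<bar>x - c\<bar>) * (max 0 (r - \<bar>x - c\<bar>))^2) > 0"
proof -
  let ?B = "ball c (r/2)"
  have pointwise: "(r/2)^3 * indicator ?B x \<le> (r - \<bar>x - c\<bar>) * (max 0 (r - \<bar>x - c\<bar>))^2" for x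
  proof (cases "x \<in> ?B")
    case True
    then have near: "r/2 \<le> r - \<bar>x - c\<bar>" by (simp add: dist_real_def abs_minus_commute)
    then have "max 0 (r - \<bar>x - c\<bar>) = r - \<bar>x - c\<bar>" using r by simp
    moreover have "(r/2)^3 \<le> (r - \<bar>x - c\<bar>)^3" using near r by (intro power_mono) auto
    ultimately show ?thesis using True by (simp add: power2_eq_square power3_eq_cube)
  qed (auto simp: max_def)
  have ind: "integrable M (\<lambda>x. (r/2)^3 * indicator ?B x :: real)"
    using sets_M finite_measure.emeasure_finite[OF finite_M]
    by (intro integrable_mult_right integrable_real_indicator) (auto simp: less_top)
  then have "integral\<^sup>L M (\<lambda>x. (r/2)^3 * indicator ?B x)
      \<le> integral\<^sup>L M (\<lambda>x. (r - \<bar>x - c\<bar>) * (max 0 (r - \<bar>x - c\<bar>))^2)"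
    using pointwise
    by (intro integral_mono[OF ind] integrable_continuous continuous_intros) auto
  moreover have "integral\<^sup>L M (\<lambda>x. (r/2)^3 * indicator ?B x) > 0"
    using measure_ball_support_pos[OF c] r by (simp add: space_M)
  ultimately show ?thesis by linarith
qed

(* A positive integral \<integral> h f^2 persists when the continuous f is replaced by
   a polynomial close to it on the support (Stone-Weierstrass and dominated
   convergence). *)
lemma polynomial_localizer:
  assumes h: "continuous_on UNIV h" and f: "continuous_on UNIV f"
    and pos: "integral\<^sup>L M (\<lambda>x. h x * (f x)^2) > 0"
  shows "\<exists>n w. integral\<^sup>L M (\<lambda>x. h x * (poly_vec n w x)^2) > 0"
proof -
  obtain g where unif: "uniform_limit K g f sequentially"
    and poly: "\<And>n. polynomial_function (g n)"
    using Stone_Weierstrass_uniform_limit[OF compact_support continuous_on_subset[OF f]] by blast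
  obtain N where near: "\<And>n x. n \<ge> N \<Longrightarrow> x \<in> K \<Longrightarrow> \<bar>g n x - f x\<bar> < 1"
    using uniform_limitD[OF unif zero_less_one]
    by (auto simp: eventually_sequentially dist_real_def)
  obtain Bh where Bh: "\<And>x. x \<in> K \<Longrightarrow> \<bar>h x\<bar> \<le> Bh" using bounded_on_support[OF h] by blast
  obtain Bf where Bf: "\<And>x. x \<in> K \<Longrightarrow> \<bar>f x\<bar> \<le> Bf" using bounded_on_support[OF f] by blast
  have cont_g: "continuous_on UNIV (g n)" for n
    by (rule continuous_on_polymonial_function[OF poly])
  have lim: "(\<lambda>n. integral\<^sup>L M (\<lambda>x. h x * (g (n + N) x)^2)) \<longlonglongrightarrow> integral\<^sup>L M (\<lambda>x. h x * (f x)^2)"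
  proof (rule integral_dominated_convergence[where w="\<lambda>_. Bh * (Bf + 1)^2"])
    show "(\<lambda>x. h x * (f x)^2) \<in> borel_measurable M"
      by (intro borel_measurable_continuous continuous_intros h f)
    show "(\<lambda>x. h x * (g (n + N) x)^2) \<in> borel_measurable M" for n
      by (intro borel_measurable_continuous continuous_intros h cont_g)
    show "integrable M (\<lambda>_. Bh * (Bf + 1)^2)"
      by (rule finite_measure.integrable_const[OF finite_M])
    show "AE x in M. (\<lambda>n. h x * (g (n + N) x)^2) \<longlonglongrightarrow> h x * (f x)^2"
      using AE_support
      by eventually_elim
        (intro tendsto_intros LIMSEQ_ignore_initial_segment tendsto_uniform_limitI[OF unif])
    show "AE x in M. norm (h x * (g (n + N) x)^2) \<le> Bh * (Bf + 1)^2" for n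
      using AE_support
    proof eventually_elim
      case (elim x)
      have "\<bar>g (n + N) x\<bar> \<le> Bf + 1" using near[OF le_add2 elim, of n] Bf[OF elim] by linarith
      then have "(g (n + N) x)^2 \<le> (Bf + 1)^2" by (metis abs_ge_zero power2_abs power_mono)
      then show ?case
        using Bh[OF elim] by (simp add: abs_mult mult_mono)
    qed
  qed
  have "\<forall>\<^sub>F n in sequentially. 0 < integral\<^sup>L M (\<lambda>x. h x * (g (n + N) x)^2)"
    using lim pos by (rule order_tendstoD(1))
  then obtain n where n: "0 < integral\<^sup>L M (\<lambda>x. h x * (g (n + N) x)^2)"
    unfolding eventually_sequentially by blast
  have "\<exists>m w. g (n + N) = poly_vec m w"
    using poly[of "n + N"]
    unfolding real_polynomial_function_eq[symmetric] real_polynomial_function_iff_sum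
      poly_vec_def[abs_def]
    by blast
  then show ?thesis using n by metis
qed

lemma localization_excludes:
  assumes c: "c \<in> K" and r: "r > 0"
  obtains N where "\<And>d g. N \<le> d \<Longrightarrow> continuous_on UNIV g \<Longrightarrow>
      (\<And>x. x \<in> K \<Longrightarrow> g x \<le> \<bar>x - c\<bar> - r) \<Longrightarrow>
      \<exists>v. integral\<^sup>L M (\<lambda>x. g x * (poly_vec d v x)^2) < 0"
proof -
  have "\<exists>N w. integral\<^sup>L M (\<lambda>x. (r - \<bar>x - c\<bar>) * (poly_vec N w x)^2) > 0"
    by (rule polynomial_localizer[OF _ _ bump_localizer_pos[OF c r]]; intro continuous_intros)
  then obtain N w where w: "integral\<^sup>L M (\<lambda>x. (r - \<bar>x - c\<bar>) * (poly_vec N w x)^2) > 0"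
    by blast
  show thesis
  proof (rule that[of N])
    fix d g assume d: "N \<le> d" and g: "continuous_on UNIV g"
      and below: "\<And>x. x \<in> K \<Longrightarrow> g x \<le> \<bar>x - c\<bar> - r"
    let ?v = "\<lambda>i. if i \<le> N then w i else 0"
    have "integral\<^sup>L M (\<lambda>x. g x * (poly_vec d ?v x)^2)
        \<le> integral\<^sup>L M (\<lambda>x. (\<bar>x - c\<bar> - r) * (poly_vec N w x)^2)"
      unfolding poly_vec_pad[OF d] using AE_support below
      by (intro integral_mono_AE integrable_continuous continuous_intros g)
        (auto elim!: eventually_mono intro: mult_right_mono)
    also have "\<dots> = integral\<^sup>L M (\<lambda>x. - ((r - \<bar>x - c\<bar>) * (poly_vec N w x)^2))"
      by (simp add: algebra_simps)
    also have "\<dots> < 0" using w by simp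
    finally show "\<exists>v. integral\<^sup>L M (\<lambda>x. g x * (poly_vec d v x)^2) < 0" by blast
  qed
qed

lemma lower_feasible_eventually_below:
  assumes "r > 0"
  shows "\<forall>\<^sub>F d in sequentially. \<forall>a \<in> lower_feasible d. a \<le> supp_min + r"
proof -
  obtain N where N: "\<And>d g. N \<le> d \<Longrightarrow> continuous_on UNIV g \<Longrightarrow>
      (\<And>x. x \<in> K \<Longrightarrow> g x \<le> \<bar>x - supp_min\<bar> - r) \<Longrightarrow>
      \<exists>v. integral\<^sup>L M (\<lambda>x. g x * (poly_vec d v x)^2) < 0"
    using localization_excludes[OF supp_min_in assms] by blast
  have "a \<le> supp_min + r" if "N \<le> d" and a: "a \<in> lower_feasible d" for d a
  proof (rule ccontr)
    assume "\<not> a \<le> supp_min + r"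
    then have below_K: "x - a \<le> \<bar>x - supp_min\<bar> - r" if "x \<in> K" for x
      using supp_min_le[OF that] by (simp add: abs_if)
    have "\<exists>v. integral\<^sup>L M (\<lambda>x. (x - a) * (poly_vec d v x)^2) < 0"
      by (rule N[OF \<open>N \<le> d\<close> _ below_K]) (intro continuous_intros)
    then obtain v where "integral\<^sup>L M (\<lambda>x. (x - a) * (poly_vec d v x)^2) < 0" by blast
    moreover have "0 \<le> integral\<^sup>L M (\<lambda>x. (x - a) * (poly_vec d v x)^2)"
      using a unfolding lower_feasible_def by blast
    ultimately show False by linarith
  qed
  then show ?thesis unfolding eventually_sequentially by blast
qed

lemma upper_feasible_eventually_above:
  assumes "r > 0"
  shows "\<forall>\<^sub>F d in sequentially. \<forall>b \<in> upper_feasible d. supp_max - r \<le> b"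
proof -
  obtain N where N: "\<And>d g. N \<le> d \<Longrightarrow> continuous_on UNIV g \<Longrightarrow>
      (\<And>x. x \<in> K \<Longrightarrow> g x \<le> \<bar>x - supp_max\<bar> - r) \<Longrightarrow>
      \<exists>v. integral\<^sup>L M (\<lambda>x. g x * (poly_vec d v x)^2) < 0"
    using localization_excludes[OF supp_max_in assms] by blast
  have "supp_max - r \<le> b" if "N \<le> d" and b: "b \<in> upper_feasible d" for d b
  proof (rule ccontr)
    assume "\<not> supp_max - r \<le> b"
    then have below_K: "b - x \<le> \<bar>x - supp_max\<bar> - r" if "x \<in> K" for x
      using supp_max_ge[OF that] by (simp add: abs_if)
    have "\<exists>v. integral\<^sup>L M (\<lambda>x. (b - x) * (poly_vec d v x)^2) < 0"
      by (rule N[OF \<open>N \<le> d\<close> _ below_K]) (intro continuous_intros)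
    then obtain v where "integral\<^sup>L M (\<lambda>x. (b - x) * (poly_vec d v x)^2) < 0" by blast
    moreover have "0 \<le> integral\<^sup>L M (\<lambda>x. (b - x) * (poly_vec d v x)^2)"
      using b unfolding upper_feasible_def by blast
    ultimately show False by linarith
  qed
  then show ?thesis unfolding eventually_sequentially by blast
qed

lemma sdp_optimal_tendsto:
  assumes opt: "\<And>d. sdp_optimal (moment_seq M) d (A d) (B d)"
  shows "A \<longlonglongrightarrow> supp_min" "B \<longlonglongrightarrow> supp_max"
proof -
  note bounds = sdp_optimal_bounds[OF opt]
  show "A \<longlonglongrightarrow> supp_min"
  proof (rule order_tendstoI)
    fix y assume "supp_min < y"
    then have "0 < (y - supp_min) / 2" by simp
    have below: "A d < y" if "\<forall>a \<in> lower_feasible d. a \<le> supp_min + (y - supp_min) / 2" for d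
    proof -
      have "A d \<le> supp_min + (y - supp_min) / 2" using that bounds(1)[of d] by blast
      then show ?thesis using \<open>supp_min < y\<close> by argo
    qed
    from lower_feasible_eventually_below[OF \<open>0 < (y - supp_min) / 2\<close>] below
    show "\<forall>\<^sub>F d in sequentially. A d < y"
      by (rule eventually_mono)
  next
    fix y assume "y < supp_min"
    then show "\<forall>\<^sub>F d in sequentially. y < A d"
      using bounds(2) by (intro always_eventually allI) (rule order_less_le_trans)
  qed
  show "B \<longlonglongrightarrow> supp_max"
  proof (rule order_tendstoI)
    fix y assume "y < supp_max"
    then have "0 < (supp_max - y) / 2" by simp
    have below: "y < B d" if "\<forall>b \<in> upper_feasible d. supp_max - (supp_max - y) / 2 \<le> b" for d
    proof -
      have "supp_max - (supp_max - y) / 2 \<le> B d" using that bounds(3)[of d] by blast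
      then show ?thesis using \<open>y < supp_max\<close> by argo
    qed
    from upper_feasible_eventually_above[OF \<open>0 < (supp_max - y) / 2\<close>] below
    show "\<forall>\<^sub>F d in sequentially. y < B d"
      by (rule eventually_mono)
  next
    fix y assume "supp_max < y"
    then show "\<forall>\<^sub>F d in sequentially. B d < y"
      using bounds(4) by (intro always_eventually allI) (rule order_le_less_trans)
  qed
qed

lemma support_hull:
  shows "K \<subseteq> {supp_min..supp_max}"
    and "K \<subseteq> {a'..b'} \<Longrightarrow> {supp_min..supp_max} \<subseteq> {a'..b'}"
    and "is_interval K \<Longrightarrow> K = {supp_min..supp_max}"
proof -
  show hull: "K \<subseteq> {supp_min..supp_max}"
    using supp_min_le supp_max_ge by (simp add: subset_eq)
  show "{supp_min..supp_max} \<subseteq> {a'..b'}" if "K \<subseteq> {a'..b'}"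
  proof -
    have "a' \<le> supp_min" "supp_max \<le> b'" using that supp_min_in supp_max_in by auto
    then show ?thesis by simp
  qed
  show "K = {supp_min..supp_max}" if "is_interval K"
  proof
    show "{supp_min..supp_max} \<subseteq> K"
    proof
      fix x assume "x \<in> {supp_min..supp_max}"
      then show "x \<in> K"
        using that supp_min_in supp_max_in unfolding is_interval_1 by (meson atLeastAtMost_iff)
    qed
  qed (rule hull)
qed

end

theorem corollary3p4:
  fixes M :: "real measure"
  assumes "sets M = sets borel"
    and "finite_measure M"
    and "emeasure M UNIV \<noteq> 0"
    and "compact (measure_support M)"
  shows "(\<forall>d. \<exists>a b. sdp_optimal (moment_seq M) d a b)
    \<and> (\<forall>A B :: nat \<Rightarrow> real. (\<forall>d. sdp_optimal (moment_seq M) d (A d) (B d)) \<longrightarrow>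
         (\<exists>as bs. as \<le> bs \<and> A \<longlonglongrightarrow> as \<and> B \<longlonglongrightarrow> bs
            \<and> measure_support M \<subseteq> {as..bs}
            \<and> (\<forall>a' b'. measure_support M \<subseteq> {a'..b'} \<longrightarrow> {as..bs} \<subseteq> {a'..b'})
            \<and> (is_interval (measure_support M) \<longrightarrow> measure_support M = {as..bs})))"
proof -
  interpret compactly_supported_measure M
    by (rule compactly_supported_measure.intro[OF assms])
  show ?thesis
  proof (intro conjI allI impI)
    show "\<exists>a b. sdp_optimal (moment_seq M) d a b" for d by (rule sdp_optimum_exists)
  next
    fix A B :: "nat \<Rightarrow> real"
    assume "\<forall>d. sdp_optimal (moment_seq M) d (A d) (B d)"
    then have "A \<longlonglongrightarrow> supp_min" "B \<longlonglongrightarrow> supp_max"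
      using sdp_optimal_tendsto by blast+
    moreover have "supp_min \<le> supp_max" by (rule supp_min_le[OF supp_max_in])
    ultimately show "\<exists>as bs. as \<le> bs \<and> A \<longlonglongrightarrow> as \<and> B \<longlonglongrightarrow> bs \<and> K \<subseteq> {as..bs}
        \<and> (\<forall>a' b'. K \<subseteq> {a'..b'} \<longrightarrow> {as..bs} \<subseteq> {a'..b'})
        \<and> (is_interval K \<longrightarrow> K = {as..bs})"
      using support_hull by (intro exI[of _ supp_min] exI[of _ supp_max] conjI allI impI) simp_all
  qed
qed

end
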